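(* Let $n\ge0$ and let $f$ be a stable real-rational all-pass function of order $n$ with unit gain ($|f(e^{j\omega})|=1$ for all $\omega$) all of whose poles are real (no poles if $n=0$). Then for every $\omega_p\in(-\pi,\pi)\setminus\{0\}$, $$\theta_f'(\omega_p)\le-\left|\frac{\sin(\theta_f(\omega_p))}{\sin\omega_p}\right|,$$ and equality holds for all such $\omega_p$ when $n=0$ or $n=1$.
   Context: Stable means all poles in the open unit disk. $\theta_f(\omega):=\angle f(e^{j\omega})$ is a continuous choice of argument and $\theta_f'(\omega)$ its derivative with respect to $\omega$ (the quantity $\sin\theta_f(\omega_p)$ is independent of the branch). *)

theory Defs
  imports "HOL-Analysis.Analysis" "HOL-Computational_Algebra.Computational_Algebra"
begin

definition ratf :: "real poly \<Rightarrow> real poly \<Rightarrow> complex \<Rightarrow> complex" where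
  "ratf p q z = poly (map_poly complex_of_real p) z / poly (map_poly complex_of_real q) z"

text \<open>f = p/q (coprime real polynomials) is a stable (proper, all poles in the open unit disk)
  real-rational all-pass function of order n (McMillan degree max(deg p, deg q)) with unit gain,
  all of whose poles are real.\<close>
definition stable_real_pole_allpass :: "real poly \<Rightarrow> real poly \<Rightarrow> nat \<Rightarrow> bool" where
  "stable_real_pole_allpass p q n \<longleftrightarrow>
     q \<noteq> 0 \<and> coprime p q \<and> degree p \<le> degree q \<and> max (degree p) (degree q) = n \<and>
     (\<forall>z. poly (map_poly complex_of_real q) z = 0 \<longrightarrow> z \<in> \<real> \<and> norm z < 1) \<and>
     (\<forall>w::real. norm (ratf p q (cis w)) = 1)"

end

theory Submission
  imports Defs "HOL-Computational_Algebra.Field_as_Ring"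
begin

text \<open>A stable all-pass function with real poles is, after cancellation, \<open>\<plusminus>\<Prod>(1 - a\<^sub>k z) / (z - a\<^sub>k)\<close>
  with \<open>\<bar>a\<^sub>k\<bar> < 1\<close>: the numerator must be \<open>\<plusminus>\<close> the reflection \<open>z\<^sup>n q(1/z)\<close> of the denominator,
  because \<open>p \<cdot> z\<^sup>n p(1/z)\<close> and \<open>q \<cdot> z\<^sup>n q(1/z)\<close> agree on the unit circle.
  On the circle each factor \<open>g\<^sub>a\<close> is unimodular, has logarithmic derivative \<open>z g\<^sub>a' / g\<^sub>a = -\<tau>\<^sub>a\<close>
  with \<open>\<tau>\<^sub>a = (1 - a\<^sup>2) / \<bar>1 - a z\<bar>\<^sup>2 \<ge> 0\<close> (the group delay of the factor), and satisfies \<open>Im g\<^sub>a = -\<tau>\<^sub>a Im z\<close>.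
  Hence \<open>\<theta>' = -\<Sum>\<tau>\<^sub>a\<close>, while \<open>\<bar>sin \<theta>\<bar> = \<bar>Im \<Prod>g\<^sub>a\<bar> \<le> \<Sum>\<bar>Im g\<^sub>a\<bar> = \<Sum>\<tau>\<^sub>a \<bar>sin \<omega>\<bar>\<close>,
  because \<open>\<bar>Im (u v)\<bar> \<le> \<bar>Im u\<bar> + \<bar>Im v\<bar>\<close> for unimodular \<open>u, v\<close>; with at most one factor this
  is an equality.\<close>

abbreviation of_real_poly :: "real poly \<Rightarrow> complex poly" where
  "of_real_poly \<equiv> map_poly complex_of_real"

lemma of_real_poly_mult: "of_real_poly (a * b) = of_real_poly a * of_real_poly b"
  by (intro poly_eqI) (simp add: coeff_map_poly coeff_mult)

lemma of_real_poly_diff: "of_real_poly (a - b) = of_real_poly a - of_real_poly b"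
  by (intro poly_eqI) (simp add: coeff_map_poly)

lemma of_real_poly_reflect: "of_real_poly (reflect_poly a) = reflect_poly (of_real_poly a)"
  by (intro poly_eqI) (simp add: coeff_map_poly coeff_reflect_poly degree_map_poly)

lemma poly_of_real_poly_cnj: "poly (of_real_poly a) (cnj z) = cnj (poly (of_real_poly a) z)"
  by (subst poly_cnj_real) (auto simp: coeff_map_poly)

lemma poly_eq_0_if_vanishes_on_circle:
  fixes P :: "complex poly"
  assumes "\<And>z. norm z = 1 \<Longrightarrow> poly P z = 0"
  shows "P = 0"
proof (rule ccontr)
  assume "P \<noteq> 0"
  define f where "f x = Complex x (sqrt (1 - x\<^sup>2))" for x
  have "f ` {-1..1} \<subseteq> {z. poly P z = 0}"
  proof
    fix z assume "z \<in> f ` {-1..1}"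
    then obtain x where x: "x \<in> {-1..1}" "z = f x" by auto
    then have "x\<^sup>2 \<le> 1" by (simp add: abs_square_le_1 abs_le_iff)
    then show "z \<in> {z. poly P z = 0}" using assms x by (simp add: f_def cmod_def)
  qed
  moreover have "inj_on f {-1..1}" by (rule inj_onI) (simp add: f_def complex_eq_iff)
  ultimately have "finite {-1..(1::real)}"
    using poly_roots_finite[OF \<open>P \<noteq> 0\<close>] finite_subset finite_imageD by metis
  then show False using infinite_Icc[of "-1::real" 1] by simp
qed

lemma complex_poly_eq_prod_roots:
  fixes p :: "complex poly"
  obtains rs where "length rs = degree p" "\<And>r. r \<in> set rs \<Longrightarrow> poly p r = 0"
    "\<And>z. poly p z = lead_coeff p * (\<Prod>r\<leftarrow>rs. z - r)"
proof -
  obtain rs where rs: "mset rs = proots p" using ex_mset by blast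
  have "poly p z = lead_coeff p * (\<Prod>r\<leftarrow>rs. z - r)" for z
  proof -
    have "poly p z = lead_coeff p * poly (\<Prod>r\<leftarrow>rs. [:-r, 1:]) z"
      by (subst complex_poly_decompose_multiset[symmetric])
        (simp add: prod_mset_prod_list flip: rs mset_map)
    also have "poly (\<Prod>r\<leftarrow>rs. [:-r, 1:]) z = (\<Prod>r\<leftarrow>rs. z - r)"
      by (induction rs) (simp_all add: left_diff_distrib)
    finally show ?thesis .
  qed
  moreover have "length rs = degree p" using size_proots_complex[of p] by (simp flip: rs size_mset)
  moreover have "poly p r = 0" if "r \<in> set rs" for r
  proof -
    have "r \<in># proots p" using that by (simp flip: rs)
    then show ?thesis by (cases "p = 0") auto
  qed
  ultimately show thesis using that by blast
qed

lemma mult_reflect_poly_eq_if_norm_eq_on_circle: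
  fixes p q :: "real poly"
  assumes deg: "degree p \<le> degree q"
    and unimodular: "\<And>z. norm z = 1 \<Longrightarrow> norm (poly (of_real_poly p) z) = norm (poly (of_real_poly q) z)"
  shows "p * (reflect_poly p * monom 1 (degree q - degree p)) = reflect_poly q * q"
proof -
  define n where "n = degree q"
  define R where "R = reflect_poly q"
  define S where "S = reflect_poly p * monom 1 (n - degree p)"
  have evR: "poly (of_real_poly R) z = z ^ n * poly (of_real_poly q) (inverse z)" if "z \<noteq> 0" for z
    using poly_reflect_poly_nz[OF that] by (simp add: R_def n_def of_real_poly_reflect degree_map_poly)
  have evS: "poly (of_real_poly S) z = z ^ n * poly (of_real_poly p) (inverse z)" if "z \<noteq> 0" for z
  proof -
    have "poly (of_real_poly S) z = z ^ degree p * poly (of_real_poly p) (inverse z) * z ^ (n - degree p)"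
      using poly_reflect_poly_nz[OF that]
      by (simp add: S_def of_real_poly_mult of_real_poly_reflect map_poly_monom poly_monom degree_map_poly)
    also have "\<dots> = z ^ n * poly (of_real_poly p) (inverse z)"
      using deg by (simp add: n_def mult_ac flip: power_add)
    finally show ?thesis .
  qed
  have "of_real_poly (p * S - R * q) = 0"
  proof (rule poly_eq_0_if_vanishes_on_circle)
    fix z :: complex assume z: "norm z = 1"
    then have inv: "inverse z = cnj z" using divide_conv_cnj[OF z, of 1] by (simp add: divide_inverse)
    have z0: "z \<noteq> 0" using z by auto
    have "poly (of_real_poly p) z * poly (of_real_poly S) z
        = z ^ n * (poly (of_real_poly p) z * cnj (poly (of_real_poly p) z))"
      by (simp add: evS[OF z0] inv poly_of_real_poly_cnj)
    also have "\<dots> = z ^ n * of_real ((norm (poly (of_real_poly p) z))\<^sup>2)"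
      by (simp only: complex_norm_square)
    also have "\<dots> = z ^ n * of_real ((norm (poly (of_real_poly q) z))\<^sup>2)"
      by (simp only: unimodular[OF z])
    also have "\<dots> = z ^ n * (poly (of_real_poly q) z * cnj (poly (of_real_poly q) z))"
      by (simp only: complex_norm_square)
    also have "\<dots> = poly (of_real_poly R) z * poly (of_real_poly q) z"
      by (simp add: evR[OF z0] inv poly_of_real_poly_cnj)
    finally show "poly (of_real_poly (p * S - R * q)) z = 0"
      by (simp add: of_real_poly_diff of_real_poly_mult)
  qed
  then show ?thesis by (simp add: map_poly_eq_0_iff R_def S_def n_def)
qed

lemma unimodular_ratio_imp_reflect_poly:
  fixes p q :: "real poly"
  assumes coprime: "coprime p q" and deg: "degree p \<le> degree q"
    and nonzero: "\<And>z. norm z = 1 \<Longrightarrow> poly (of_real_poly q) z \<noteq> 0"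
    and unimodular: "\<And>z. norm z = 1 \<Longrightarrow> norm (poly (of_real_poly p) z) = norm (poly (of_real_poly q) z)"
  obtains c where "\<bar>c\<bar> = 1" "p = smult c (reflect_poly q)"
proof -
  define R where "R = reflect_poly q"
  define S where "S = reflect_poly p * monom 1 (degree q - degree p)"
  have p1: "poly (of_real_poly p) 1 \<noteq> 0" using nonzero[of 1] unimodular[of 1] by auto
  then have "p \<noteq> 0" by auto
  have identity: "p * S = R * q"
    unfolding R_def S_def by (rule mult_reflect_poly_eq_if_norm_eq_on_circle[OF deg unimodular])
  then have "p dvd R" using coprime by (metis coprime_dvd_mult_left_iff dvd_triv_left)
  then obtain s where s: "R = p * s" by (elim dvdE)
  then have S: "S = s * q" using identity \<open>p \<noteq> 0\<close> by (simp add: mult_ac)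
  have "degree S \<le> degree q"
    using degree_mult_le[of "reflect_poly p" "monom (1::real) (degree q - degree p)"]
      degree_reflect_poly_le[of p] deg by (simp add: S_def degree_monom_eq)
  moreover have "q \<noteq> 0" "s \<noteq> 0" using nonzero[of 1] \<open>p \<noteq> 0\<close> S by (auto simp: S_def)
  ultimately have "degree s = 0" using S by (simp add: degree_mult_eq)
  then obtain c where "s = [:c:]" by (metis degree_0_id)
  then have Rc: "R = smult c p" using s by simp
  have "\<bar>c\<bar> * norm (poly (of_real_poly p) 1) = norm (poly (of_real_poly R) 1)"
    by (simp add: Rc map_poly_smult norm_mult)
  also have "\<dots> = norm (poly (of_real_poly p) 1)"
    using poly_reflect_poly_nz[of 1 "of_real_poly q"] unimodular[of 1]
    by (simp add: R_def of_real_poly_reflect)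
  finally have c: "\<bar>c\<bar> = 1" using p1 by simp
  then have "c * c = 1" by (metis abs_mult_self_eq mult_1)
  then have "p = smult c R" by (simp add: Rc)
  with c show thesis using that R_def by blast
qed

definition blaschke_factor :: "real \<Rightarrow> complex \<Rightarrow> complex" where
  "blaschke_factor a z = (1 - of_real a * z) / (z - of_real a)"

definition blaschke :: "real list \<Rightarrow> complex \<Rightarrow> complex" where
  "blaschke as z = (\<Prod>a\<leftarrow>as. blaschke_factor a z)"

lemma blaschke_eq_divide:
  "blaschke as z = (\<Prod>a\<leftarrow>as. 1 - of_real a * z) / (\<Prod>a\<leftarrow>as. z - of_real a)"
  by (induction as) (simp_all add: blaschke_def blaschke_factor_def)

lemma real_rooted_poly_factors:
  fixes q :: "real poly"
  assumes real_roots: "\<And>z. poly (of_real_poly q) z = 0 \<Longrightarrow> z \<in> \<real>"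
  obtains as where "length as = degree q" "\<And>a. a \<in> set as \<Longrightarrow> poly (of_real_poly q) (of_real a) = 0"
    "\<And>z. poly (of_real_poly q) z = of_real (lead_coeff q) * (\<Prod>a\<leftarrow>as. z - of_real a)"
    "\<And>z. poly (of_real_poly (reflect_poly q)) z = of_real (lead_coeff q) * (\<Prod>a\<leftarrow>as. 1 - of_real a * z)"
proof -
  obtain rs where rs: "length rs = degree (of_real_poly q)"
      "\<And>r. r \<in> set rs \<Longrightarrow> poly (of_real_poly q) r = 0"
      "\<And>z. poly (of_real_poly q) z = lead_coeff (of_real_poly q) * (\<Prod>r\<leftarrow>rs. z - r)"
    by (rule complex_poly_eq_prod_roots[of "of_real_poly q"]) blast
  define as where "as = map Re rs"
  have rs_as: "rs = map of_real as"
    unfolding as_def map_map by (rule map_idI[symmetric]) (metis of_real_Re real_roots rs(2) comp_apply)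
  have ev_q: "poly (of_real_poly q) z = of_real (lead_coeff q) * (\<Prod>a\<leftarrow>as. z - of_real a)" for z
    using rs(3)[of z] by (simp add: rs_as degree_map_poly coeff_map_poly o_def)
  have len: "length as = degree q" using rs(1) by (simp add: as_def degree_map_poly)
  have "poly (of_real_poly (reflect_poly q)) z = of_real (lead_coeff q) * (\<Prod>a\<leftarrow>as. 1 - of_real a * z)"
    for z
  proof (cases "z = 0")
    case True
    then show ?thesis
      by (simp add: of_real_poly_reflect degree_map_poly coeff_map_poly map_replicate_const)
  next
    case False
    have "z ^ length bs * (\<Prod>b\<leftarrow>bs. inverse z - of_real b) = (\<Prod>b\<leftarrow>bs. 1 - of_real b * z)"
      for bs :: "real list"
      using False by (induction bs) (simp_all add: field_simps)
    from this[of as] show ?thesis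
      using poly_reflect_poly_nz[OF False]
      by (simp add: of_real_poly_reflect ev_q degree_map_poly len mult.left_commute)
  qed
  moreover have "poly (of_real_poly q) (of_real a) = 0" if "a \<in> set as" for a
    using that rs(2) by (auto simp: rs_as)
  ultimately show thesis using that len ev_q by blast
qed

lemma stable_real_pole_allpass_eq_blaschke:
  assumes "stable_real_pole_allpass p q n"
  obtains as c where "length as = n" "\<forall>a\<in>set as. \<bar>a\<bar> < 1" "\<bar>c\<bar> = 1"
    "\<And>z. ratf p q z = of_real c * blaschke as z"
proof -
  have coprime: "coprime p q" and deg: "degree p \<le> degree q" and n: "degree q = n"
    and poles: "\<And>z. poly (of_real_poly q) z = 0 \<Longrightarrow> z \<in> \<real> \<and> norm z < 1"
    and gain: "\<And>w. norm (ratf p q (cis w)) = 1"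
    using assms by (auto simp: stable_real_pole_allpass_def)
  have nonzero: "poly (of_real_poly q) z \<noteq> 0" if "norm z = 1" for z
    using poles that by force
  have unimodular: "norm (poly (of_real_poly p) z) = norm (poly (of_real_poly q) z)"
    if "norm z = 1" for z
  proof -
    have "z \<noteq> 0" using that by auto
    then have "z = cis (Arg z)" using that by (simp add: cis_Arg sgn_div_norm)
    then have "norm (ratf p q z) = 1" using gain by metis
    then show ?thesis using nonzero[OF that] by (simp add: ratf_def norm_divide)
  qed
  obtain c where c: "\<bar>c\<bar> = 1" "p = smult c (reflect_poly q)"
    using unimodular_ratio_imp_reflect_poly[OF coprime deg nonzero unimodular] by blast
  obtain as where as: "length as = degree q"
      "\<And>a. a \<in> set as \<Longrightarrow> poly (of_real_poly q) (of_real a) = 0"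
      "\<And>z. poly (of_real_poly q) z = of_real (lead_coeff q) * (\<Prod>a\<leftarrow>as. z - of_real a)"
      "\<And>z. poly (of_real_poly (reflect_poly q)) z
         = of_real (lead_coeff q) * (\<Prod>a\<leftarrow>as. 1 - of_real a * z)"
    using real_rooted_poly_factors poles by metis
  have "lead_coeff q \<noteq> 0" using nonzero[of 1] by auto
  then have "ratf p q z = of_real c * blaschke as z" for z
    by (simp add: ratf_def c(2) map_poly_smult as(3,4) blaschke_eq_divide)
  moreover have "\<forall>a\<in>set as. \<bar>a\<bar> < 1" using as(2) poles by fastforce
  ultimately show thesis using that as(1) n c(1) by blast
qed

definition factor_group_delay :: "real \<Rightarrow> complex \<Rightarrow> real" where
  "factor_group_delay a z = (1 - a\<^sup>2) / (norm (1 - of_real a * z))\<^sup>2"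

definition group_delay :: "real list \<Rightarrow> complex \<Rightarrow> real" where
  "group_delay as z = (\<Sum>a\<leftarrow>as. factor_group_delay a z)"

lemma norm_minus_of_real_on_circle:
  fixes z :: complex
  assumes "norm z = 1"
  shows "norm (z - of_real a) = norm (1 - of_real a * z)"
proof -
  have "1 - of_real a * z = z * cnj (z - of_real a)"
    using assms by (simp add: algebra_simps complex_norm_square[symmetric])
  then have "norm (1 - of_real a * z) = norm z * norm (cnj (z - of_real a))" by (simp only: norm_mult)
  then show ?thesis using assms by (simp only: complex_mod_cnj)
qed

lemma blaschke_factor_denominators_nonzero:
  fixes z :: complex
  assumes "norm z = 1" "\<bar>a\<bar> < 1"
  shows "z - of_real a \<noteq> 0" "1 - of_real a * z \<noteq> 0"
proof -
  show "z - of_real a \<noteq> 0" using assms by (auto simp: norm_of_real)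
  then show "1 - of_real a * z \<noteq> 0"
    using norm_minus_of_real_on_circle[OF assms(1), of a] by (metis norm_eq_zero)
qed

lemma norm_blaschke_factor:
  assumes "norm z = 1" "\<bar>a\<bar> < 1"
  shows "norm (blaschke_factor a z) = 1"
  using norm_minus_of_real_on_circle[OF assms(1)] blaschke_factor_denominators_nonzero[OF assms]
  by (simp add: blaschke_factor_def norm_divide)

lemma Im_blaschke_factor:
  assumes "norm z = 1" "\<bar>a\<bar> < 1"
  shows "Im (blaschke_factor a z) = - factor_group_delay a z * Im z"
proof -
  have zz: "z * cnj z = 1" using assms(1) by (simp add: complex_norm_square[symmetric])
  have "blaschke_factor a z = (1 - of_real a * z) * cnj (z - of_real a) / of_real ((norm (z - of_real a))\<^sup>2)"
    unfolding blaschke_factor_def by (rule complex_div_cnj)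
  also have "(1 - of_real a * z) * cnj (z - of_real a) = cnj z - of_real (2 * a) + of_real (a\<^sup>2) * z"
    using zz by (simp add: algebra_simps power2_eq_square)
  finally have "Im (blaschke_factor a z) = (a\<^sup>2 - 1) * Im z / (norm (z - of_real a))\<^sup>2"
    by (simp only: Im_divide_of_real) (simp add: algebra_simps)
  then show ?thesis
    by (simp add: factor_group_delay_def norm_minus_of_real_on_circle[OF assms(1)] minus_divide_left
        algebra_simps)
qed

lemma blaschke_factor_has_field_derivative:
  assumes "norm z = 1" "\<bar>a\<bar> < 1"
  shows "(blaschke_factor a has_field_derivative
           - blaschke_factor a z * of_real (factor_group_delay a z) / z) (at z)"
proof -
  note nz = blaschke_factor_denominators_nonzero[OF assms]
  have z0: "z \<noteq> 0" using assms(1) by auto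
  have deriv: "(blaschke_factor a has_field_derivative - of_real (1 - a\<^sup>2) / (z - of_real a)\<^sup>2) (at z)"
    unfolding blaschke_factor_def[abs_def]
    by (rule derivative_eq_intros refl | use nz in \<open>simp add: power2_eq_square algebra_simps\<close>)+
  have "of_real (factor_group_delay a z) = of_real (1 - a\<^sup>2) * z / ((1 - of_real a * z) * (z - of_real a))"
  proof -
    have "cnj z = 1 / z" using divide_conv_cnj[OF assms(1), of 1] by simp
    then have "cnj (1 - of_real a * z) = (z - of_real a) / z" using z0 by (simp add: field_simps)
    then have D: "of_real ((norm (1 - of_real a * z))\<^sup>2) = (1 - of_real a * z) * (z - of_real a) / z"
      by (simp only: complex_norm_square) simp
    show ?thesis unfolding factor_group_delay_def of_real_divide D using nz z0 by (simp add: field_simps)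
  qed
  moreover have "- c / v\<^sup>2 = - (w / v) * (c * z / (w * v)) / z"
    if "w \<noteq> 0" "v \<noteq> 0" for c w v :: complex
    using that z0 by (simp add: field_simps power2_eq_square)
  ultimately have "- of_real (1 - a\<^sup>2) / (z - of_real a)\<^sup>2
      = - blaschke_factor a z * of_real (factor_group_delay a z) / z"
    using nz by (simp only: blaschke_factor_def)
  with deriv show ?thesis by simp
qed

lemma blaschke_Nil [simp]: "blaschke [] z = 1"
  by (simp add: blaschke_def)

lemma blaschke_Cons [simp]: "blaschke (a # as) z = blaschke_factor a z * blaschke as z"
  by (simp add: blaschke_def)

lemma group_delay_Nil [simp]: "group_delay [] z = 0"
  by (simp add: group_delay_def)

lemma group_delay_Cons [simp]: "group_delay (a # as) z = factor_group_delay a z + group_delay as z"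
  by (simp add: group_delay_def)

lemma factor_group_delay_nonneg:
  assumes "\<bar>a\<bar> < 1"
  shows "0 \<le> factor_group_delay a z"
proof -
  have "a\<^sup>2 < 1" using assms abs_square_less_1 by blast
  then show ?thesis by (simp add: factor_group_delay_def)
qed

lemma norm_blaschke:
  assumes "norm z = 1" "\<forall>a\<in>set as. \<bar>a\<bar> < 1"
  shows "norm (blaschke as z) = 1"
  using assms(2) by (induction as) (simp_all add: norm_mult norm_blaschke_factor[OF assms(1)])

lemma blaschke_has_field_derivative:
  assumes "norm z = 1" "\<forall>a\<in>set as. \<bar>a\<bar> < 1"
  shows "(blaschke as has_field_derivative - blaschke as z * of_real (group_delay as z) / z) (at z)"
  using assms(2)
proof (induction as)
  case Nil
  then show ?case by simp
next
  case (Cons a as)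
  have "((\<lambda>w. blaschke_factor a w * blaschke as w) has_field_derivative
      (- blaschke_factor a z * of_real (factor_group_delay a z) / z) * blaschke as z
      + (- blaschke as z * of_real (group_delay as z) / z) * blaschke_factor a z) (at z)"
    using Cons by (intro DERIV_mult blaschke_factor_has_field_derivative[OF assms(1)]) simp_all
  moreover have "blaschke (a # as) = (\<lambda>w. blaschke_factor a w * blaschke as w)"
    by (simp add: fun_eq_iff)
  ultimately show ?case
    by (auto elim!: DERIV_cong simp: algebra_simps diff_divide_distrib add_divide_distrib)
qed

lemma abs_Im_blaschke_le:
  assumes "norm z = 1" "\<forall>a\<in>set as. \<bar>a\<bar> < 1"
  shows "\<bar>Im (blaschke as z)\<bar> \<le> group_delay as z * \<bar>Im z\<bar>"
  using assms(2)
proof (induction as)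
  case (Cons a as)
  let ?g = "blaschke_factor a z" and ?B = "blaschke as z"
  have a: "\<bar>a\<bar> < 1" using Cons.prems by simp
  have "\<bar>Im (?g * ?B)\<bar> \<le> \<bar>Re ?g\<bar> * \<bar>Im ?B\<bar> + \<bar>Im ?g\<bar> * \<bar>Re ?B\<bar>"
    by (simp add: abs_mult[symmetric] abs_triangle_ineq)
  also have "\<dots> \<le> \<bar>Im ?B\<bar> + \<bar>Im ?g\<bar>"
  proof -
    have "\<bar>Re ?g\<bar> \<le> 1" using abs_Re_le_cmod[of ?g] norm_blaschke_factor[OF assms(1) a] by simp
    moreover have "\<bar>Re ?B\<bar> \<le> 1"
      using abs_Re_le_cmod[of ?B] norm_blaschke[OF assms(1)] Cons.prems by simp
    ultimately show ?thesis by (intro add_mono mult_left_le_one_le mult_right_le_one_le) auto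
  qed
  also have "\<dots> \<le> group_delay (a # as) z * \<bar>Im z\<bar>"
    using Cons factor_group_delay_nonneg[OF a]
    by (simp add: Im_blaschke_factor[OF assms(1) a] abs_mult algebra_simps)
  finally show ?case by simp
qed simp

lemma abs_Im_blaschke_eq:
  assumes "norm z = 1" "\<forall>a\<in>set as. \<bar>a\<bar> < 1" "length as \<le> 1"
  shows "\<bar>Im (blaschke as z)\<bar> = group_delay as z * \<bar>Im z\<bar>"
proof (cases as)
  case (Cons a bs)
  then have "as = [a]" "\<bar>a\<bar> < 1" using assms(2,3) by auto
  then show ?thesis
    using Im_blaschke_factor[OF assms(1)] factor_group_delay_nonneg by (simp add: abs_mult)
qed simp

lemma continuous_arg_has_real_derivative:
  fixes \<theta> :: "real \<Rightarrow> real" and G :: "real \<Rightarrow> complex"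
  assumes cont: "isCont \<theta> w" and arg: "\<And>v. G v = cis (\<theta> v)"
    and G': "(G has_vector_derivative G') (at w)"
  shows "(\<theta> has_real_derivative Im (G' / G w)) (at w)"
proof -
  txt \<open>Near \<open>w\<close> the jump \<open>\<theta> v - \<theta> w\<close> stays in \<open>(-pi, pi)\<close>, where the principal
    logarithm recovers it from \<open>G v / G w\<close>.\<close>
  define h where "h v = \<theta> w + Im (Ln (G v / G w))" for v
  have "eventually (\<lambda>v. dist (\<theta> v) (\<theta> w) < pi) (at w)"
    using cont unfolding isCont_def by (rule tendstoD) simp
  then have "eventually (\<lambda>v. dist (\<theta> v) (\<theta> w) < pi) (nhds w)"
    by (simp add: eventually_nhds_conv_at)
  then have "eventually (\<lambda>v. \<theta> v = h v) (nhds w)"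
  proof eventually_elim
    case (elim v)
    then have "\<theta> v - \<theta> w \<in> {-pi<..pi}" by (auto simp: dist_real_def abs_less_iff)
    moreover have "G v / G w = cis (\<theta> v - \<theta> w)" by (simp add: arg cis_divide)
    ultimately show ?case by (simp add: h_def Ln_cis)
  qed
  moreover have "(h has_real_derivative Im (G' / G w)) (at w)"
  proof -
    have "((\<lambda>v. G v / G w) has_vector_derivative G' / G w) (at w)"
      using has_vector_derivative_divide[OF G'] by simp
    moreover have "(Ln has_field_derivative 1) (at (G w / G w))"
      using has_field_derivative_Ln[of 1] arg[of w] by simp
    ultimately have "((\<lambda>v. Ln (G v / G w)) has_vector_derivative G' / G w) (at w)"
      using field_vector_diff_chain_at by (fastforce simp: o_def)
    then show ?thesis
      unfolding h_def by (auto intro!: derivative_eq_intros)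
  qed
  ultimately show ?thesis using DERIV_cong_ev[OF refl _ refl] by blast
qed

lemma arg_blaschke_has_real_derivative:
  fixes \<theta> :: "real \<Rightarrow> real"
  assumes "isCont \<theta> w" "c \<noteq> 0" "\<forall>a\<in>set as. \<bar>a\<bar> < 1"
    and arg: "\<And>v. of_real c * blaschke as (cis v) = cis (\<theta> v)"
  shows "(\<theta> has_real_derivative - group_delay as (cis w)) (at w)"
proof -
  let ?z = "cis w" and ?G = "\<lambda>v. of_real c * blaschke as (cis v)"
  have "(cis has_vector_derivative \<i> * ?z) (at w)"
    using has_derivative_cis[of "\<lambda>v. v" "\<lambda>t. t"] by (simp add: has_vector_derivative_def)
  moreover have "((\<lambda>z. of_real c * blaschke as z) has_field_derivative
      of_real c * (- blaschke as ?z * of_real (group_delay as ?z) / ?z)) (at ?z)"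
    using blaschke_has_field_derivative[of ?z as] assms(3) by (intro DERIV_cmult) simp_all
  ultimately have "(?G has_vector_derivative
      \<i> * ?z * (of_real c * (- blaschke as ?z * of_real (group_delay as ?z) / ?z))) (at w)"
    using field_vector_diff_chain_at by (fastforce simp: o_def)
  from continuous_arg_has_real_derivative[where G = ?G, OF assms(1) arg this]
  moreover have "blaschke as ?z \<noteq> 0" using norm_blaschke[of ?z as] assms(3) by auto
  ultimately show ?thesis using assms(2) by (simp add: field_simps)
qed

theorem lemma3:
  fixes p q :: "real poly" and n :: nat and \<theta> :: "real \<Rightarrow> real" and wp :: real
  assumes f: "stable_real_pole_allpass p q n"
    and \<theta>_cont: "continuous_on UNIV \<theta>"
    and \<theta>_arg: "\<And>w. ratf p q (cis w) = cis (\<theta> w)"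
    and wp: "wp \<in> {-pi<..<pi} - {0}"
  shows "\<theta> differentiable (at wp)
         \<and> deriv \<theta> wp \<le> - \<bar>sin (\<theta> wp) / sin wp\<bar>
         \<and> ((n = 0 \<or> n = 1) \<longrightarrow> deriv \<theta> wp = - \<bar>sin (\<theta> wp) / sin wp\<bar>)"
proof -
  obtain as c where as: "length as = n" "\<forall>a\<in>set as. \<bar>a\<bar> < 1" and c: "\<bar>c\<bar> = 1"
    and ratf: "\<And>z. ratf p q z = of_real c * blaschke as z"
    using stable_real_pole_allpass_eq_blaschke[OF f] by blast
  let ?z = "cis wp"
  have arg: "\<And>w. of_real c * blaschke as (cis w) = cis (\<theta> w)" by (metis ratf \<theta>_arg)
  have "isCont \<theta> wp" using \<theta>_cont by (simp add: continuous_on_eq_continuous_at)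
  moreover have "c \<noteq> 0" using c by auto
  ultimately have "(\<theta> has_real_derivative - group_delay as ?z) (at wp)"
    using arg_blaschke_has_real_derivative[OF _ _ as(2) arg] by blast
  then have diff: "\<theta> differentiable (at wp)" and deriv: "deriv \<theta> wp = - group_delay as ?z"
    by (auto simp: DERIV_imp_deriv real_differentiable_def)
  have "sin (\<theta> wp) = Im (cis (\<theta> wp))" by simp
  also have "\<dots> = c * Im (blaschke as ?z)" by (simp flip: arg)
  finally have sin_\<theta>: "\<bar>sin (\<theta> wp)\<bar> = \<bar>Im (blaschke as ?z)\<bar>" using c by (simp add: abs_mult)
  have "sin wp \<noteq> 0" using wp sin_eq_0_pi[of wp] by auto
  then show ?thesis
    using diff deriv abs_Im_blaschke_le[of ?z as] abs_Im_blaschke_eq[of ?z as] as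
    by (auto simp: abs_divide sin_\<theta> divide_le_eq)
qed

end
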